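(* Let $d\ge2$ and for $i=1,\dots,d$ let $u_i\in C^2(\mathbb R)$ be such that $u_i'$ is $T_i$-periodic for some $T_i>0$, the zeros of $u_i'$ are isolated, and $u_i''(t)=0$ at every zero $t$ of $u_i'$. Let $u(x)=\sum_{i=1}^du_i(x_i)$ for $x\in\mathbb R^d$, $Y=\prod_{i=1}^d[0,T_i]$, and let $X$ be the gradient flow $\partial_tX(t,x)=\nabla u(X(t,x))$, $X(0,x)=x$. Then the trajectories of $X$ are bounded if and only if each $u_i'$ has a zero in $\mathbb R$. Moreover, the following are equivalent: (a) there is $C>0$ such that $\big|\int_0^t\Delta u(X(s,x))\,ds\big|\le C$ for all $t\ge0$ and $x\in\mathbb R^d$; (b) $\prod_{i=1}^du_i'(x_i)\neq0$ for all $x\in\mathbb R^d$; (c) there exists a positive $Y$-periodic function $\sigma\in C^1(\mathbb R^d)$ with $\mathrm{div}(\sigma\nabla u)=0$ in $\mathbb R^d$. *)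

theory Defs
  imports "HOL-Analysis.Analysis"
begin

definition partial_deriv :: "(real^'n \<Rightarrow> real) \<Rightarrow> 'n \<Rightarrow> real^'n \<Rightarrow> real" where
  "partial_deriv f i y = deriv (\<lambda>h. f (y + h *\<^sub>R axis i 1)) 0"

definition gradient_vec :: "(real^'n \<Rightarrow> real) \<Rightarrow> real^'n \<Rightarrow> real^'n" where
  "gradient_vec f y = (\<chi> i. partial_deriv f i y)"

definition divergence :: "(real^'n \<Rightarrow> real^'n) \<Rightarrow> real^'n \<Rightarrow> real" where
  "divergence F y = (\<Sum>i\<in>UNIV. partial_deriv (\<lambda>z. F z $ i) i y)"

definition laplacian :: "(real^'n \<Rightarrow> real) \<Rightarrow> real^'n \<Rightarrow> real" where
  "laplacian f y = divergence (gradient_vec f) y"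

definition sep_sum :: "('n::finite \<Rightarrow> real \<Rightarrow> real) \<Rightarrow> real^'n \<Rightarrow> real" where
  "sep_sum uu x = (\<Sum>i\<in>UNIV. uu i (x $ i))"

end

theory Submission
  imports Defs
begin

(*
  The gradient flow decouples into the scalar equations x_i' = u_i'(x_i). If u_i' has a zero,
  periodicity yields equilibria to the left and right of every point; since the right-hand
  side is C^1 a solution can never reach an equilibrium it did not start at, so each coordinate
  stays trapped between two of them. If u_i' has no zero, |u_i'| >= m > 0 and x_i moves at
  least linearly in time.

  Along a trajectory, div (sigma grad u) = 0 says exactly (ln sigma)' = - Laplace u, so a
  positive periodic (hence bounded away from 0 and infinity) sigma bounds the time integral of
  Laplace u. If no u_i' vanishes, sigma(y) = prod_j u_j'(0) / u_j'(y_j) is such a density. If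
  some u_i' vanishes, start where no u_j' does: the integral is the increment of
  sum_j ln |u_j'(X_j)|, and the i-th coordinate, being bounded, must creep towards a zero of
  u_i', driving that increment to minus infinity.
*)

section \<open>Periodic functions\<close>

lemma periodic_shift_int:
  fixes g :: "real \<Rightarrow> 'a"
  assumes per: "\<And>t. g (t + T) = g t"
  shows "g (t + of_int n * T) = g t"
proof (induction n rule: int_induct[where k = 0])
  case (step1 i)
  have "g (t + of_int (i + 1) * T) = g ((t + of_int i * T) + T)"
    by (simp add: algebra_simps)
  with step1 show ?case by (simp add: per)
next
  case (step2 i)
  have "g (t + of_int i * T) = g ((t + of_int (i - 1) * T) + T)"
    by (simp add: algebra_simps)
  with step2 show ?case by (simp add: per)
qed simp

lemma periodic_range:
  fixes g :: "real \<Rightarrow> 'a"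
  assumes "T > 0" and per: "\<And>t. g (t + T) = g t"
  shows "range g = g ` {0..T}"
proof -
  have "g t \<in> g ` {0..T}" for t
  proof
    have "t = frac (t / T) * T + of_int \<lfloor>t / T\<rfloor> * T"
      using \<open>T > 0\<close> by (simp add: frac_def algebra_simps)
    then show "g t = g (frac (t / T) * T)"
      by (metis periodic_shift_int per)
    show "frac (t / T) * T \<in> {0..T}"
      using \<open>T > 0\<close> frac_lt_1[of "t / T"] by simp
  qed
  then show ?thesis by auto
qed

lemma axis_periodic_range:
  fixes g :: "real^'n \<Rightarrow> 'a"
  assumes T: "\<And>i. T i > 0" and per: "\<And>y i. g (y + T i *\<^sub>R axis i 1) = g y"
  shows "range g = g ` cbox 0 (\<chi> i. T i)"
proof -
  have shift: "g (z + (\<Sum>i\<in>S. (of_int (k i) * T i) *\<^sub>R axis i 1)) = g z"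
    if "finite S" for S z k
    using that
  proof (induction S arbitrary: z)
    case (insert j S)
    let ?w = "z + (\<Sum>i\<in>S. (of_int (k i) * T i) *\<^sub>R axis i 1)"
    have "g (?w + (s + T j) *\<^sub>R axis j 1) = g (?w + s *\<^sub>R axis j 1)" for s
      using per[of "?w + s *\<^sub>R axis j 1" j] by (simp add: scaleR_add_left add.assoc)
    from periodic_shift_int[of "\<lambda>s. g (?w + s *\<^sub>R axis j 1)", OF this, of 0 "k j"]
    have "g (?w + (of_int (k j) * T j) *\<^sub>R axis j 1) = g ?w" by simp
    with insert show ?case by (simp add: algebra_simps)
  qed simp
  have "g y \<in> g ` cbox 0 (\<chi> i. T i)" for y
  proof
    define y' where "y' = (\<chi> i. frac (y $ i / T i) * T i)"
    define n where "n i = \<lfloor>y $ i / T i\<rfloor>" for i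
    have "T i \<noteq> 0" for i
      using T[of i] by simp
    then have "y = y' + (\<Sum>i\<in>UNIV. (of_int (n i) * T i) *\<^sub>R axis i 1)"
      by (simp add: vec_eq_iff y'_def n_def frac_def algebra_simps axis_def if_distrib cong: if_cong)
    then show "g y = g y'" using shift[of UNIV y' n] by simp
    have "0 \<le> frac (y $ i / T i) * T i \<and> frac (y $ i / T i) * T i \<le> T i" for i
      using T[of i] frac_lt_1[of "y $ i / T i"] by simp
    then show "y' \<in> cbox 0 (\<chi> i. T i)" by (simp add: mem_box_cart y'_def)
  qed
  then show ?thesis by auto
qed

section \<open>Scalar autonomous equations\<close>

lemma C1_lipschitz_on_interval:
  fixes f f' :: "real \<Rightarrow> real"
  assumes "\<And>v. (f has_real_derivative f' v) (at v)" and "continuous_on {a..b} f'"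
  shows "\<exists>L. L-lipschitz_on {a..b} f"
proof -
  obtain B where B: "\<And>v. v \<in> {a..b} \<Longrightarrow> \<bar>f' v\<bar> \<le> B"
    using compact_imp_bounded[OF compact_continuous_image[OF assms(2) compact_Icc]]
    by (fastforce simp: bounded_iff)
  have "\<bar>B\<bar>-lipschitz_on {a..b} f"
  proof (rule lipschitz_onI)
    fix u v assume "u \<in> {a..b}" "v \<in> {a..b}"
    have "norm (f u - f v) \<le> \<bar>B\<bar> * norm (u - v)"
    proof (rule field_differentiable_bound)
      show "(f has_field_derivative f' w) (at w within {a..b})" for w
        using assms(1) by (rule has_field_derivative_at_within)
      show "norm (f' w) \<le> \<bar>B\<bar>" if "w \<in> {a..b}" for w
        using B[OF that] by simp
    qed (use \<open>u \<in> {a..b}\<close> \<open>v \<in> {a..b}\<close> in auto)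
    then show "dist (f u) (f v) \<le> \<bar>B\<bar> * dist u v" by (simp add: dist_norm)
  qed simp
  then show ?thesis ..
qed

lemma autonomous_ode_stationary_forward:
  fixes f x :: "real \<Rightarrow> real"
  assumes dx: "\<And>s. (x has_real_derivative f (x s)) (at s)"
    and lip: "L-lipschitz_on (x ` {t0..t}) f" and zero: "f (x t0) = 0" and "t0 \<le> t"
  shows "x t = x t0"
proof -
  \<comment> \<open>Gronwall: the weighted squared distance to the equilibrium cannot grow.\<close>
  define g where "g s = (x s - x t0)\<^sup>2 * exp (- 2 * L * (s - t0))" for s
  have "g t \<le> g t0"
  proof (rule DERIV_nonpos_imp_nonincreasing[OF \<open>t0 \<le> t\<close>])
    fix s assume "t0 \<le> s" "s \<le> t"
    have "(x s - x t0) * f (x s) = (x s - x t0) * (f (x s) - f (x t0))"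
      using zero by simp
    also have "\<dots> \<le> \<bar>x s - x t0\<bar> * \<bar>f (x s) - f (x t0)\<bar>"
      by (metis abs_ge_self abs_mult)
    also have "\<dots> \<le> \<bar>x s - x t0\<bar> * (L * \<bar>x s - x t0\<bar>)"
      using lipschitz_onD[OF lip, of "x s" "x t0"] \<open>t0 \<le> s\<close> \<open>s \<le> t\<close> \<open>t0 \<le> t\<close>
      by (intro mult_left_mono) (auto simp: dist_real_def)
    finally have "2 * (x s - x t0) * f (x s) - 2 * L * (x s - x t0)\<^sup>2 \<le> 0"
      by (simp add: power2_eq_square abs_mult_self_eq algebra_simps)
    then have "exp (- 2 * L * (s - t0)) * (2 * (x s - x t0) * f (x s) - 2 * L * (x s - x t0)\<^sup>2) \<le> 0"
      by (simp add: mult_nonneg_nonpos)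
    moreover have "(g has_real_derivative
        exp (- 2 * L * (s - t0)) * (2 * (x s - x t0) * f (x s) - 2 * L * (x s - x t0)\<^sup>2)) (at s)"
      unfolding g_def
      by (auto intro!: derivative_eq_intros dx simp: power2_eq_square algebra_simps)
    ultimately show "\<exists>y. (g has_real_derivative y) (at s) \<and> y \<le> 0" by blast
  qed
  moreover have "g t0 = 0" "g t \<ge> 0" by (simp_all add: g_def)
  ultimately have "g t = 0" by linarith
  then show ?thesis by (simp add: g_def)
qed

lemma autonomous_ode_stationary:
  fixes f f' x :: "real \<Rightarrow> real"
  assumes df: "\<And>v. (f has_real_derivative f' v) (at v)" and cf: "continuous_on UNIV f'"
    and dx: "\<And>s. (x has_real_derivative f (x s)) (at s)" and zero: "f (x t0) = 0"
  shows "x t = x t0"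
proof -
  have lip: "\<exists>L. L-lipschitz_on (x ` {a..b}) f" for a b
  proof -
    have "continuous_on {a..b} x"
      using dx by (meson DERIV_continuous continuous_at_imp_continuous_on)
    then obtain R where "x ` {a..b} \<subseteq> {-R..R}"
      using bounded_subset_cbox_symmetric[OF compact_imp_bounded[OF compact_continuous_image]]
      by (metis compact_Icc cbox_interval)
    moreover obtain L where "L-lipschitz_on {-R..R} f"
      using C1_lipschitz_on_interval[OF df continuous_on_subset[OF cf]] by blast
    ultimately show ?thesis by (blast intro: lipschitz_on_subset)
  qed
  show ?thesis
  proof (cases "t0 \<le> t")
    case True
    with lip show ?thesis by (metis autonomous_ode_stationary_forward dx zero)
  next
    case False
    \<comment> \<open>Run time backwards: \<open>x (- s)\<close> solves the equation for \<open>- f\<close>.\<close>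
    define y where "y = (\<lambda>s. x (- s))"
    have "((\<lambda>s. x (- s)) has_real_derivative f (x (- s)) * - 1) (at s)" for s
      by (rule DERIV_chain2[OF dx]) (auto intro!: derivative_eq_intros)
    then have dy: "(y has_real_derivative - f (y s)) (at s)" for s
      by (simp add: y_def)
    have "y ` {- t0..- t} = x ` {t..t0}"
      by (auto simp: y_def image_iff intro!: bexI[of _ "- _"])
    obtain L where "L-lipschitz_on (x ` {t..t0}) f" using lip by blast
    with \<open>y ` {- t0..- t} = x ` {t..t0}\<close>
    have "L-lipschitz_on (y ` {- t0..- t}) (\<lambda>v. - f v)" by simp
    from autonomous_ode_stationary_forward[OF dy this] zero False
    show ?thesis by (simp add: y_def)
  qed
qed

lemma autonomous_ode_displacement_ge:
  fixes f x :: "real \<Rightarrow> real"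
  assumes dx: "\<And>s. (x has_real_derivative f (x s)) (at s)"
    and speed: "\<And>s. 0 \<le> s \<Longrightarrow> c \<le> \<bar>f (x s)\<bar>" and "0 \<le> t"
  shows "c * t \<le> \<bar>x t - x 0\<bar>"
proof (cases "t = 0")
  case False
  with \<open>0 \<le> t\<close> obtain s where "0 < s" "s < t" "x t - x 0 = (t - 0) * f (x s)"
    using MVT2[of 0 t x "\<lambda>s. f (x s)"] dx by force
  with speed[of s] \<open>0 \<le> t\<close> show ?thesis
    by (simp add: abs_mult mult.commute mult_left_mono)
qed simp

lemma bounded_autonomous_ode_approaches_zero:
  fixes f x :: "real \<Rightarrow> real"
  assumes dx: "\<And>s. (x has_real_derivative f (x s)) (at s)"
    and "bounded (range x)" and "e > 0"
  shows "\<exists>t\<ge>0. \<bar>f (x t)\<bar> < e"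
proof (rule ccontr)
  assume "\<not> ?thesis"
  then have "\<And>s. 0 \<le> s \<Longrightarrow> e \<le> \<bar>f (x s)\<bar>" by force
  then have grow: "e * t \<le> \<bar>x t - x 0\<bar>" if "0 \<le> t" for t
    using autonomous_ode_displacement_ge[OF dx _ that] by blast
  obtain B where B: "\<And>t. \<bar>x t\<bar> \<le> B"
    using \<open>bounded (range x)\<close> by (auto simp: bounded_iff)
  have "e * ((2 * B + 1) / e) \<le> 2 * B"
    using grow[of "(2 * B + 1) / e"] B[of 0] B[of "(2 * B + 1) / e"] \<open>e > 0\<close>
    by (smt (verit) divide_nonneg_pos)
  with \<open>e > 0\<close> show False by simp
qed

lemma periodic_autonomous_ode_bounded:
  fixes f f' x :: "real \<Rightarrow> real"
  assumes df: "\<And>v. (f has_real_derivative f' v) (at v)" and cf: "continuous_on UNIV f'"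
    and dx: "\<And>s. (x has_real_derivative f (x s)) (at s)"
    and "T > 0" and per: "\<And>v. f (v + T) = f v" and "f z = 0"
  shows "bounded (range x)"
proof -
  have stuck: "x t = c" if "f c = 0" "min (x 0) (x t) \<le> c" "c \<le> max (x 0) (x t)" for c t
  proof -
    have "connected (range x)"
      using dx by (meson DERIV_continuous continuous_at_imp_continuous_on
          connected_continuous_image connected_UNIV)
    then have "c \<in> range x"
      using connectedD_interval[of "range x" "min (x 0) (x t)" "max (x 0) (x t)" c] that
      by (cases "x 0 \<le> x t") (auto simp: min_def max_def)
    then obtain s where "x s = c" by blast
    with that(1) autonomous_ode_stationary[OF df cf dx] show ?thesis by metis
  qed
  define a where "a = z + of_int \<lfloor>(x 0 - z) / T\<rfloor> * T"
  define b where "b = z + of_int \<lceil>(x 0 - z) / T\<rceil> * T"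
  have "f a = 0" "f b = 0"
    using \<open>f z = 0\<close> periodic_shift_int[of f T, OF per] by (simp_all add: a_def b_def)
  moreover have "a \<le> x 0" "x 0 \<le> b"
    using \<open>T > 0\<close> floor_divide_lower[of T "x 0 - z"] ceiling_divide_upper[of T "x 0 - z"]
    by (simp_all add: a_def b_def algebra_simps)
  ultimately have "a \<le> x t \<and> x t \<le> b" for t
    using stuck[of a t] stuck[of b t] by (smt (verit))
  then have "range x \<subseteq> {a..b}" by auto
  then show ?thesis by (rule bounded_subset[OF bounded_closed_interval])
qed

lemma continuous_nonvanishing_same_sign:
  fixes f :: "'a::real_normed_vector \<Rightarrow> real"
  assumes "continuous_on UNIV f" and "\<And>v. f v \<noteq> 0"
  shows "0 < f a * f b"
proof (rule ccontr)
  assume "\<not> 0 < f a * f b"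
  then have "min (f a) (f b) \<le> 0" "0 \<le> max (f a) (f b)"
    by (auto simp: min_def max_def zero_less_mult_iff)
  moreover have "connected (range f)"
    by (rule connected_continuous_image[OF assms(1) connected_UNIV])
  ultimately have "0 \<in> range f"
    using connectedD_interval[of "range f" "min (f a) (f b)" "max (f a) (f b)" 0]
    by (cases "f a \<le> f b") (auto simp: min_def max_def)
  with assms(2) show False by auto
qed

lemma periodic_nonvanishing_bounded_away:
  fixes f :: "real \<Rightarrow> real"
  assumes "continuous_on UNIV f" and "T > 0" and per: "\<And>v. f (v + T) = f v"
    and "\<And>v. f v \<noteq> 0"
  shows "\<exists>m>0. \<forall>v. m \<le> \<bar>f v\<bar>"
proof -
  obtain v0 where "v0 \<in> {0..T}" and min: "\<And>v. v \<in> {0..T} \<Longrightarrow> \<bar>f v0\<bar> \<le> \<bar>f v\<bar>"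
    using continuous_attains_inf[of "{0..T}" "\<lambda>v. \<bar>f v\<bar>"] \<open>T > 0\<close>
      continuous_on_subset[OF assms(1)]
    by (force intro: continuous_intros)
  have "\<bar>f v0\<bar> \<le> \<bar>f v\<bar>" for v
    using periodic_range[where g = f, OF \<open>T > 0\<close> per] min by (metis image_iff rangeI)
  with assms(4) show ?thesis by (metis zero_less_abs_iff)
qed

section \<open>Calculus in coordinates and separable potentials\<close>

lemma DERIV_ln_abs:
  fixes x :: real
  assumes "x \<noteq> 0"
  shows "((\<lambda>v. ln \<bar>v\<bar>) has_real_derivative 1 / x) (at x)"
proof (cases "x > 0")
  case True
  show ?thesis
    by (rule has_field_derivative_transform_within_open[of ln _ _ "{0<..}"])
       (use True in \<open>auto intro!: DERIV_ln_divide\<close>)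
next
  case False
  with assms have "x < 0" by simp
  have "((\<lambda>v. ln (- v)) has_real_derivative 1 / x) (at x)"
    using \<open>x < 0\<close> by (auto intro!: derivative_eq_intros simp: field_simps)
  then show ?thesis
    by (rule has_field_derivative_transform_within_open[of _ _ _ "{..<0}"])
       (use \<open>x < 0\<close> in auto)
qed

lemma bounded_if_components_bounded:
  fixes S :: "(real^'n) set"
  assumes "\<And>i. bounded ((\<lambda>v. v $ i) ` S)"
  shows "bounded S"
proof -
  obtain B where B: "\<And>i v. v \<in> S \<Longrightarrow> \<bar>v $ i\<bar> \<le> B i"
    using assms by (simp add: bounded_iff) metis
  have "norm v \<le> (\<Sum>i\<in>UNIV. B i)" if "v \<in> S" for v
    using norm_le_l1_cart[of v] sum_mono[of UNIV "\<lambda>i. \<bar>v $ i\<bar>" B] B[OF that] by simp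
  then show ?thesis by (auto simp: bounded_iff)
qed

lemma axis_shift_nth [simp]:
  "(y + h *\<^sub>R axis i (1::real)) $ j = (if j = i then y $ j + h else y $ j)"
  by (simp add: axis_def)

lemma DERIV_shift_to_0:
  "(g has_real_derivative D) (at a) \<Longrightarrow> ((\<lambda>h. g (a + h)) has_real_derivative D) (at 0)"
  using DERIV_shift[of g D 0 a] by (simp add: add.commute)

lemma partial_deriv_eqI:
  "((\<lambda>h. f (y + h *\<^sub>R axis i 1)) has_real_derivative D) (at 0) \<Longrightarrow> partial_deriv f i y = D"
  unfolding partial_deriv_def by (rule DERIV_imp_deriv)

lemma gradient_vec_sep_sum:
  assumes "\<And>i t. (uu i has_real_derivative du i t) (at t)"
  shows "gradient_vec (sep_sum uu) y = (\<chi> i. du i (y $ i))"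
proof -
  have "partial_deriv (sep_sum uu) i y = du i (y $ i)" for i
  proof (rule partial_deriv_eqI)
    have "((\<lambda>h. \<Sum>j\<in>UNIV. uu j (if j = i then y $ j + h else y $ j)) has_real_derivative
        (\<Sum>j\<in>UNIV. if j = i then du j (y $ j) else 0)) (at 0)"
      by (intro DERIV_sum) (auto intro: DERIV_shift_to_0[OF assms])
    then have "((\<lambda>h. \<Sum>j\<in>UNIV. uu j (if j = i then y $ j + h else y $ j)) has_real_derivative
        du i (y $ i)) (at 0)"
      by simp
    then show "((\<lambda>h. sep_sum uu (y + h *\<^sub>R axis i 1)) has_real_derivative du i (y $ i)) (at 0)"
      by (simp only: sep_sum_def axis_shift_nth)
  qed
  then show ?thesis by (simp add: gradient_vec_def)
qed

lemma laplacian_sep_sum: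
  assumes "\<And>i t. (uu i has_real_derivative du i t) (at t)"
    and "\<And>i t. (du i has_real_derivative ddu i t) (at t)"
  shows "laplacian (sep_sum uu) y = (\<Sum>i\<in>UNIV. ddu i (y $ i))"
proof -
  have "partial_deriv (\<lambda>z. gradient_vec (sep_sum uu) z $ i) i y = ddu i (y $ i)" for i
    by (rule partial_deriv_eqI)
       (simp add: gradient_vec_sep_sum[OF assms(1)] DERIV_shift_to_0[OF assms(2)])
  then show ?thesis by (simp add: laplacian_def divergence_def)
qed

lemma has_derivative_along_line:
  assumes "(f has_derivative D) (at y)"
  shows "((\<lambda>h. f (y + h *\<^sub>R a)) has_real_derivative D a) (at 0)"
proof -
  have "((f \<circ> (\<lambda>h. y + h *\<^sub>R a)) has_derivative (D \<circ> (\<lambda>h. h *\<^sub>R a))) (at 0)"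
    by (rule diff_chain_at) (use assms in \<open>auto intro!: derivative_eq_intros\<close>)
  moreover have "D \<circ> (\<lambda>h. h *\<^sub>R a) = (\<lambda>h. h * D a)"
    using linear_scale[OF has_derivative_linear[OF assms]] by (auto simp: fun_eq_iff)
  ultimately show ?thesis by (simp add: has_field_derivative_def comp_def mult_commute_abs)
qed

lemma linear_cart_expansion:
  fixes D :: "real^'n \<Rightarrow> 'b::real_vector"
  assumes "linear D"
  shows "D v = (\<Sum>i\<in>UNIV. v $ i *\<^sub>R D (axis i 1))"
proof -
  have "D v = D (\<Sum>i\<in>UNIV. v $ i *\<^sub>R axis i 1)"
    using basis_expansion[of v] by (simp add: scalar_mult_eq_scaleR)
  also have "\<dots> = (\<Sum>i\<in>UNIV. v $ i *\<^sub>R D (axis i 1))"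
    by (simp add: linear_sum[OF assms] linear_scale[OF assms])
  finally show ?thesis .
qed

lemma divergence_scaleR_gradient_sep_sum:
  fixes \<sigma> :: "real^'n::finite \<Rightarrow> real"
  assumes d1: "\<And>i t. (uu i has_real_derivative du i t) (at t)"
    and d2: "\<And>i t. (du i has_real_derivative ddu i t) (at t)"
    and ds: "(\<sigma> has_derivative D) (at y)"
  shows "divergence (\<lambda>z. \<sigma> z *\<^sub>R gradient_vec (sep_sum uu) z) y
       = D (gradient_vec (sep_sum uu) y) + \<sigma> y * laplacian (sep_sum uu) y"
proof -
  have "partial_deriv (\<lambda>z. (\<sigma> z *\<^sub>R gradient_vec (sep_sum uu) z) $ i) i y
      = D (axis i 1) * du i (y $ i) + \<sigma> y * ddu i (y $ i)" for i
  proof (rule partial_deriv_eqI)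
    from DERIV_mult[OF has_derivative_along_line[OF ds] DERIV_shift_to_0[OF d2]]
    show "((\<lambda>h. (\<sigma> (y + h *\<^sub>R axis i 1) *\<^sub>R gradient_vec (sep_sum uu) (y + h *\<^sub>R axis i 1)) $ i)
        has_real_derivative D (axis i 1) * du i (y $ i) + \<sigma> y * ddu i (y $ i)) (at 0)"
      by (simp add: gradient_vec_sep_sum[OF d1] mult.commute)
  qed
  moreover have "D (gradient_vec (sep_sum uu) y) = (\<Sum>i\<in>UNIV. du i (y $ i) * D (axis i 1))"
    using linear_cart_expansion[OF has_derivative_linear[OF ds], of "gradient_vec (sep_sum uu) y"]
    by (simp add: gradient_vec_sep_sum[OF d1])
  ultimately show ?thesis
    by (simp add: divergence_def laplacian_sep_sum[OF d1 d2] sum.distrib sum_distrib_left mult.commute)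
qed

definition periodic_invariant_density ::
    "('n::finite \<Rightarrow> real \<Rightarrow> real) \<Rightarrow> ('n \<Rightarrow> real) \<Rightarrow> (real^'n \<Rightarrow> real) \<Rightarrow> (real^'n \<Rightarrow> real^'n \<Rightarrow> real) \<Rightarrow> bool"
  where "periodic_invariant_density uu T \<sigma> \<sigma>' \<longleftrightarrow>
      (\<forall>y. (\<sigma> has_derivative \<sigma>' y) (at y))
    \<and> (\<forall>i. continuous_on UNIV (\<lambda>y. \<sigma>' y (axis i 1)))
    \<and> (\<forall>y. \<sigma> y > 0)
    \<and> (\<forall>y i. \<sigma> (y + T i *\<^sub>R axis i 1) = \<sigma> y)
    \<and> (\<forall>y. divergence (\<lambda>z. \<sigma> z *\<^sub>R gradient_vec (sep_sum uu) z) y = 0)"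

lemma periodic_invariant_density_exists:
  fixes uu du ddu :: "'n::finite \<Rightarrow> real \<Rightarrow> real"
  assumes d1: "\<And>i t. (uu i has_real_derivative du i t) (at t)"
    and d2: "\<And>i t. (du i has_real_derivative ddu i t) (at t)"
    and c2: "\<And>i. continuous_on UNIV (ddu i)"
    and per: "\<And>i t. du i (t + T i) = du i t"
    and nz: "\<And>i t. du i t \<noteq> 0"
  shows "\<exists>\<sigma> \<sigma>'. periodic_invariant_density uu T \<sigma> \<sigma>'"
proof -
  \<comment> \<open>\<open>\<sigma> u\<^sub>i'(y\<^sub>i)\<close> does not depend on \<open>y\<^sub>i\<close>, so each summand of the divergence vanishes.\<close>
  define g where "g j s = du j 0 / du j s" for j s
  define g' where "g' j s = - du j 0 * ddu j s / (du j s)\<^sup>2" for j s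
  have cdu: "continuous_on UNIV (du j)" for j
    using d2 by (meson DERIV_continuous continuous_at_imp_continuous_on)
  have dg: "(g j has_real_derivative g' j s) (at s)" for j s
    unfolding g_def g'_def using nz[of j s]
    by (auto intro!: derivative_eq_intros d2 simp: power2_eq_square)
  have gpos: "g j s > 0" for j s
    using continuous_nonvanishing_same_sign[OF cdu nz, of j 0 s]
    by (simp add: g_def zero_less_divide_iff zero_less_mult_iff)
  define \<sigma> where "\<sigma> y = (\<Prod>j\<in>UNIV. g j (y $ j))" for y :: "real^'n"
  define \<sigma>' where "\<sigma>' y v = (\<Sum>i\<in>UNIV. v $ i * g' i (y $ i) * (\<Prod>j\<in>UNIV - {i}. g j (y $ j)))"
    for y v :: "real^'n"
  have "(\<sigma> has_derivative \<sigma>' y) (at y)" for y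
    unfolding \<sigma>_def[abs_def] \<sigma>'_def[abs_def]
    by (rule has_derivative_prod)
      (rule DERIV_compose_FDERIV[OF dg bounded_linear_imp_has_derivative[OF bounded_linear_vec_nth]])
  moreover have "continuous_on UNIV (\<lambda>y. \<sigma>' y (axis i 1))" for i
    using cdu c2 nz unfolding \<sigma>'_def g_def g'_def
    by (intro continuous_intros continuous_on_compose2[of UNIV _ UNIV "\<lambda>y. y $ _"]) auto
  moreover have "\<sigma> y > 0" for y
    unfolding \<sigma>_def by (intro prod_pos) (simp add: gpos)
  moreover have "\<sigma> (y + T i *\<^sub>R axis i 1) = \<sigma> y" for y i
    unfolding \<sigma>_def axis_shift_nth by (rule prod.cong) (auto simp: g_def per)
  moreover have "divergence (\<lambda>z. \<sigma> z *\<^sub>R gradient_vec (sep_sum uu) z) y = 0" for y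
  proof -
    have "partial_deriv (\<lambda>z. (\<sigma> z *\<^sub>R gradient_vec (sep_sum uu) z) $ i) i y = 0" for i
    proof (rule partial_deriv_eqI)
      have "\<sigma> (y + h *\<^sub>R axis i 1) * du i (y $ i + h) = du i 0 * (\<Prod>j\<in>UNIV - {i}. g j (y $ j))" for h
        unfolding \<sigma>_def axis_shift_nth using nz[of i "y $ i + h"]
        by (subst prod.remove[of UNIV i]) (auto simp: g_def intro!: prod.cong)
      then show "((\<lambda>h. (\<sigma> (y + h *\<^sub>R axis i 1) *\<^sub>R gradient_vec (sep_sum uu) (y + h *\<^sub>R axis i 1)) $ i)
          has_real_derivative 0) (at 0)"
        by (simp add: gradient_vec_sep_sum[OF d1])
    qed
    then show ?thesis by (simp add: divergence_def)
  qed
  ultimately show ?thesis unfolding periodic_invariant_density_def by blast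
qed

section \<open>The gradient flow\<close>

locale separable_gradient_flow =
  fixes uu du ddu :: "'n::finite \<Rightarrow> real \<Rightarrow> real" and T :: "'n \<Rightarrow> real"
    and X :: "real \<Rightarrow> real^'n \<Rightarrow> real^'n"
  assumes potential_deriv: "\<And>i t. (uu i has_real_derivative du i t) (at t)"
    and du_deriv: "\<And>i t. (du i has_real_derivative ddu i t) (at t)"
    and ddu_continuous: "\<And>i. continuous_on UNIV (ddu i)"
    and period_pos: "\<And>i. T i > 0"
    and du_periodic: "\<And>i t. du i (t + T i) = du i t"
    and du_zeros_isolated: "\<And>i t. du i t = 0 \<Longrightarrow> eventually (\<lambda>s. du i s \<noteq> 0) (at t)"
    and flow_at_0: "\<And>x. X 0 x = x"
    and flow_deriv: "\<And>x t. ((\<lambda>s. X s x) has_vector_derivative gradient_vec (sep_sum uu) (X t x)) (at t)"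
begin

lemma du_continuous: "continuous_on UNIV (du i)"
  using du_deriv by (meson DERIV_continuous continuous_at_imp_continuous_on)

lemma flow_component: "((\<lambda>s. X s x $ i) has_real_derivative du i (X t x $ i)) (at t)"
  using bounded_linear.has_vector_derivative[OF bounded_linear_vec_nth flow_deriv]
  by (simp add: has_real_derivative_iff_has_vector_derivative gradient_vec_sep_sum[OF potential_deriv])

lemma bounded_trajectories_iff: "(\<forall>x. bounded (range (\<lambda>t. X t x))) \<longleftrightarrow> (\<forall>i. \<exists>v. du i v = 0)"
proof
  assume bounded: "\<forall>x. bounded (range (\<lambda>t. X t x))"
  show "\<forall>i. \<exists>v. du i v = 0"
  proof (rule ccontr)
    assume "\<not> (\<forall>i. \<exists>v. du i v = 0)"
    then obtain i where "\<And>v. du i v \<noteq> 0" by blast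
    then obtain m where "m > 0" and m: "\<And>v. m \<le> \<bar>du i v\<bar>"
      using periodic_nonvanishing_bounded_away[OF du_continuous period_pos du_periodic] by blast
    have "bounded (range (\<lambda>t. X t 0 $ i))"
      using bounded_component_cart[OF bounded[rule_format, of 0], of i] by (simp add: image_image)
    with \<open>m > 0\<close> obtain t where "\<bar>du i (X t 0 $ i)\<bar> < m"
      using bounded_autonomous_ode_approaches_zero[where x = "\<lambda>s. X s 0 $ i", OF flow_component]
      by blast
    with m show False by (meson not_less)
  qed
next
  assume "\<forall>i. \<exists>v. du i v = 0"
  then have "bounded (range (\<lambda>t. X t x $ i))" for x i
    using periodic_autonomous_ode_bounded[where x = "\<lambda>t. X t x $ i",
        OF du_deriv ddu_continuous flow_component period_pos du_periodic]
    by metis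
  then show "\<forall>x. bounded (range (\<lambda>t. X t x))"
    by (auto intro: bounded_if_components_bounded simp: image_image)
qed

lemma integral_laplacian_along_trajectory:
  assumes "\<And>s. ((\<lambda>s. \<phi> (X s x)) has_real_derivative laplacian (sep_sum uu) (X s x)) (at s)"
    and "0 \<le> t"
  shows "integral {0..t} (\<lambda>s. laplacian (sep_sum uu) (X s x)) = \<phi> (X t x) - \<phi> x"
proof -
  have "((\<lambda>s. laplacian (sep_sum uu) (X s x)) has_integral \<phi> (X t x) - \<phi> (X 0 x)) {0..t}"
    using assms by (intro fundamental_theorem_of_calculus)
      (auto intro: has_vector_derivative_at_within simp: has_real_derivative_iff_has_vector_derivative)
  then show ?thesis by (simp add: flow_at_0 integral_unique)
qed

lemma laplacian_integral_bounded_if_invariant_density: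
  assumes "periodic_invariant_density uu T \<sigma> \<sigma>'"
  shows "\<exists>C>0. \<forall>t\<ge>0. \<forall>x. \<bar>integral {0..t} (\<lambda>s. laplacian (sep_sum uu) (X s x))\<bar> \<le> C"
proof -
  from assms have ds: "\<And>y. (\<sigma> has_derivative \<sigma>' y) (at y)" and pos: "\<And>y. \<sigma> y > 0"
    and per_\<sigma>: "\<And>y i. \<sigma> (y + T i *\<^sub>R axis i 1) = \<sigma> y"
    and div: "\<And>y. divergence (\<lambda>z. \<sigma> z *\<^sub>R gradient_vec (sep_sum uu) z) y = 0"
    unfolding periodic_invariant_density_def by blast+
  have "continuous_on UNIV (\<lambda>y. ln (\<sigma> y))"
    using ds pos by (intro continuous_intros)
      (auto intro: continuous_at_imp_continuous_on has_derivative_continuous simp: less_imp_neq[symmetric])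
  then have "bounded (range (\<lambda>y. ln (\<sigma> y)))"
    using axis_periodic_range[of T "\<lambda>y. ln (\<sigma> y)"] period_pos per_\<sigma>
    by (metis compact_imp_bounded compact_continuous_image compact_cbox continuous_on_subset subset_UNIV)
  then obtain B where B: "\<And>y. \<bar>ln (\<sigma> y)\<bar> \<le> B"
    by (auto simp: bounded_iff)
  have "((\<lambda>s. - ln (\<sigma> (X s x))) has_real_derivative laplacian (sep_sum uu) (X s x)) (at s)" for x s
  proof -
    have "((\<lambda>s. \<sigma> (X s x)) has_real_derivative \<sigma>' (X s x) (gradient_vec (sep_sum uu) (X s x))) (at s)"
      using vector_derivative_diff_chain_within[OF flow_deriv has_derivative_at_withinI[OF ds]]
      by (simp add: has_real_derivative_iff_has_vector_derivative comp_def)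
    moreover have "\<sigma>' (X s x) (gradient_vec (sep_sum uu) (X s x))
        = - \<sigma> (X s x) * laplacian (sep_sum uu) (X s x)"
      using divergence_scaleR_gradient_sep_sum[OF potential_deriv du_deriv ds] div by (simp add: eq_neg_iff_add_eq_0)
    ultimately show ?thesis
      using pos[of "X s x"] by (auto intro!: derivative_eq_intros)
  qed
  from integral_laplacian_along_trajectory[OF this]
  have "\<bar>integral {0..t} (\<lambda>s. laplacian (sep_sum uu) (X s x))\<bar> \<le> 2 * B + 1" if "0 \<le> t" for t x
    using that B[of x] B[of "X t x"] by simp
  moreover have "2 * B + 1 > 0" using B[of 0] by linarith
  ultimately show ?thesis by blast
qed

lemma flow_component_nonvanishing:
  assumes "du j (x $ j) \<noteq> 0"
  shows "du j (X s x $ j) \<noteq> 0"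
proof
  assume "du j (X s x $ j) = 0"
  then have "X 0 x $ j = X s x $ j"
    by (rule autonomous_ode_stationary[OF du_deriv ddu_continuous flow_component])
  with assms \<open>du j (X s x $ j) = 0\<close> show False by (simp add: flow_at_0)
qed

lemma integral_laplacian_eq_sum_ln_abs:
  assumes "\<And>j. du j (x $ j) \<noteq> 0" and "0 \<le> t"
  shows "integral {0..t} (\<lambda>s. laplacian (sep_sum uu) (X s x))
       = (\<Sum>j\<in>UNIV. ln \<bar>du j (X t x $ j)\<bar>) - (\<Sum>j\<in>UNIV. ln \<bar>du j (x $ j)\<bar>)"
proof (rule integral_laplacian_along_trajectory[OF _ \<open>0 \<le> t\<close>])
  fix s
  have "((\<lambda>s. ln \<bar>du j (X s x $ j)\<bar>) has_real_derivative ddu j (X s x $ j)) (at s)" for j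
    using DERIV_chain2[OF DERIV_ln_abs[OF flow_component_nonvanishing[OF assms(1), of j s]]
        DERIV_chain2[OF du_deriv flow_component]]
      flow_component_nonvanishing[OF assms(1), of j s]
    by simp
  then show "((\<lambda>s. \<Sum>j\<in>UNIV. ln \<bar>du j (X s x $ j)\<bar>) has_real_derivative
      laplacian (sep_sum uu) (X s x)) (at s)"
    unfolding laplacian_sep_sum[OF potential_deriv du_deriv] by (rule DERIV_sum)
qed

lemma sum_ln_abs_du_le:
  "\<exists>K. \<forall>y. (\<Sum>j\<in>UNIV. ln \<bar>du j (y $ j)\<bar>) \<le> ln \<bar>du i (y $ i)\<bar> + K"
proof -
  have "bounded (range (du j))" for j
    by (metis periodic_range[where g = "du j", OF period_pos du_periodic] compact_imp_bounded
        compact_continuous_image compact_Icc continuous_on_subset[OF du_continuous] subset_UNIV)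
  then obtain B where B: "\<And>j v. \<bar>du j v\<bar> \<le> B j"
    by (simp add: bounded_iff) metis
  have ln_le: "ln \<bar>du j v\<bar> \<le> \<bar>B j\<bar>" for j v
    using B[of j v] ln_bound[of "\<bar>du j v\<bar>"] by (cases "du j v = 0") auto
  have "(\<Sum>j\<in>UNIV - {i}. ln \<bar>du j (y $ j)\<bar>) \<le> (\<Sum>j\<in>UNIV. \<bar>B j\<bar>)" for y
  proof -
    have "(\<Sum>j\<in>UNIV - {i}. ln \<bar>du j (y $ j)\<bar>) \<le> (\<Sum>j\<in>UNIV - {i}. \<bar>B j\<bar>)"
      by (intro sum_mono ln_le)
    also have "\<dots> \<le> (\<Sum>j\<in>UNIV. \<bar>B j\<bar>)"
      by (rule sum_mono2) auto
    finally show ?thesis .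
  qed
  then show ?thesis
    by (intro exI[of _ "\<Sum>j\<in>UNIV. \<bar>B j\<bar>"]) (simp add: sum.remove[of UNIV i])
qed

lemma nonvanishing_if_laplacian_integral_bounded:
  assumes bound: "\<And>t x. 0 \<le> t \<Longrightarrow> \<bar>integral {0..t} (\<lambda>s. laplacian (sep_sum uu) (X s x))\<bar> \<le> C"
  shows "du i z \<noteq> 0"
proof
  assume "du i z = 0"
  have "\<exists>v. du j v \<noteq> 0" for j
    using eventually_happens[OF du_zeros_isolated[of j 0]] by auto
  then obtain x where x: "\<And>j. du j (x $ j) \<noteq> 0"
    by (metis vec_lambda_beta)
  define L where "L y = (\<Sum>j\<in>UNIV. ln \<bar>du j (y $ j)\<bar>)" for y :: "real^'n"
  obtain K where K: "\<And>y. L y \<le> ln \<bar>du i (y $ i)\<bar> + K"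
    using sum_ln_abs_du_le[of i] unfolding L_def by blast
  define e where "e = exp (- (C + K - L x + 1))"
  have "bounded (range (\<lambda>t. X t x $ i))"
    using periodic_autonomous_ode_bounded[where x = "\<lambda>t. X t x $ i",
        OF du_deriv ddu_continuous flow_component period_pos du_periodic]
      \<open>du i z = 0\<close> by blast
  moreover have "e > 0" by (simp add: e_def)
  ultimately obtain t where "0 \<le> t" and "\<bar>du i (X t x $ i)\<bar> < e"
    using bounded_autonomous_ode_approaches_zero[where x = "\<lambda>s. X s x $ i", OF flow_component]
    by blast
  then have "ln \<bar>du i (X t x $ i)\<bar> < - (C + K - L x + 1)"
    using flow_component_nonvanishing[OF x, of i t] ln_less_cancel_iff[of "\<bar>du i (X t x $ i)\<bar>" e]
    by (simp add: e_def)
  with K[of "X t x"] integral_laplacian_eq_sum_ln_abs[OF x \<open>0 \<le> t\<close>] bound[OF \<open>0 \<le> t\<close>, of x]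
  show False unfolding L_def by linarith
qed

lemma laplacian_integral_bounded_iff:
  "(\<exists>C>0. \<forall>t\<ge>0. \<forall>x. \<bar>integral {0..t} (\<lambda>s. laplacian (sep_sum uu) (X s x))\<bar> \<le> C)
    \<longleftrightarrow> (\<forall>i v. du i v \<noteq> 0)"
proof
  assume "\<exists>C>0. \<forall>t\<ge>0. \<forall>x. \<bar>integral {0..t} (\<lambda>s. laplacian (sep_sum uu) (X s x))\<bar> \<le> C"
  then obtain C where "\<And>t x. 0 \<le> t \<Longrightarrow> \<bar>integral {0..t} (\<lambda>s. laplacian (sep_sum uu) (X s x))\<bar> \<le> C"
    by blast
  then show "\<forall>i v. du i v \<noteq> 0"
    using nonvanishing_if_laplacian_integral_bounded by blast
next
  assume "\<forall>i v. du i v \<noteq> 0"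
  then obtain \<sigma> \<sigma>' where "periodic_invariant_density uu T \<sigma> \<sigma>'"
    using periodic_invariant_density_exists[where uu = uu and T = T,
        OF potential_deriv du_deriv ddu_continuous du_periodic]
    by blast
  then show "\<exists>C>0. \<forall>t\<ge>0. \<forall>x. \<bar>integral {0..t} (\<lambda>s. laplacian (sep_sum uu) (X s x))\<bar> \<le> C"
    by (rule laplacian_integral_bounded_if_invariant_density)
qed

lemma periodic_invariant_density_exists_iff:
  "(\<exists>\<sigma> \<sigma>'. periodic_invariant_density uu T \<sigma> \<sigma>') \<longleftrightarrow> (\<forall>i v. du i v \<noteq> 0)"
proof
  assume "\<exists>\<sigma> \<sigma>'. periodic_invariant_density uu T \<sigma> \<sigma>'"
  then show "\<forall>i v. du i v \<noteq> 0"
    using laplacian_integral_bounded_if_invariant_density laplacian_integral_bounded_iff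
    by blast
next
  assume "\<forall>i v. du i v \<noteq> 0"
  then show "\<exists>\<sigma> \<sigma>'. periodic_invariant_density uu T \<sigma> \<sigma>'"
    using periodic_invariant_density_exists[where uu = uu and T = T,
        OF potential_deriv du_deriv ddu_continuous du_periodic]
    by blast
qed

end

lemma prod_components_nonzero_iff:
  fixes f :: "'n::finite \<Rightarrow> 'a \<Rightarrow> 'b::semidom"
  shows "(\<forall>x::'a^'n. (\<Prod>i\<in>UNIV. f i (x $ i)) \<noteq> 0) \<longleftrightarrow> (\<forall>i v. f i v \<noteq> 0)"
proof (intro iffI allI)
  fix i v
  assume "\<forall>x::'a^'n. (\<Prod>i\<in>UNIV. f i (x $ i)) \<noteq> 0"
  then have "(\<Prod>j\<in>UNIV. f j ((\<chi> k. v) $ j)) \<noteq> 0" by blast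
  then show "f i v \<noteq> 0" by simp
qed simp

theorem proposition5p4:
  fixes uu du ddu :: "'n::finite \<Rightarrow> real \<Rightarrow> real"
    and T :: "'n \<Rightarrow> real"
    and X :: "real \<Rightarrow> real^'n \<Rightarrow> real^'n"
  assumes dim: "CARD('n) \<ge> 2"
    and d1: "\<And>i t. (uu i has_real_derivative du i t) (at t)"
    and d2: "\<And>i t. (du i has_real_derivative ddu i t) (at t)"
    and c2: "\<And>i. continuous_on UNIV (ddu i)"
    and Tpos: "\<And>i. T i > 0"
    and per: "\<And>i t. du i (t + T i) = du i t"
    and iso: "\<And>i t. du i t = 0 \<Longrightarrow> eventually (\<lambda>s. du i s \<noteq> 0) (at t)"
    and degen: "\<And>i t. du i t = 0 \<Longrightarrow> ddu i t = 0"
    and flow0: "\<And>x. X 0 x = x"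
    and flow: "\<And>x t. ((\<lambda>s. X s x) has_vector_derivative
                        gradient_vec (sep_sum uu) (X t x)) (at t)"
  shows "((\<forall>x. bounded (range (\<lambda>t. X t x))) \<longleftrightarrow> (\<forall>i. \<exists>t. du i t = 0))
    \<and> ((\<exists>C>0. \<forall>t\<ge>0. \<forall>x. \<bar>integral {0..t} (\<lambda>s. laplacian (sep_sum uu) (X s x))\<bar> \<le> C)
         \<longleftrightarrow> (\<forall>x::real^'n. (\<Prod>i\<in>UNIV. du i (x $ i)) \<noteq> 0))
    \<and> ((\<forall>x::real^'n. (\<Prod>i\<in>UNIV. du i (x $ i)) \<noteq> 0)
         \<longleftrightarrow> (\<exists>\<sigma> :: real^'n \<Rightarrow> real. \<exists>\<sigma>'.
                (\<forall>y. (\<sigma> has_derivative \<sigma>' y) (at y))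
              \<and> (\<forall>i. continuous_on UNIV (\<lambda>y. \<sigma>' y (axis i 1)))
              \<and> (\<forall>y. \<sigma> y > 0)
              \<and> (\<forall>y i. \<sigma> (y + T i *\<^sub>R axis i 1) = \<sigma> y)
              \<and> (\<forall>y. divergence (\<lambda>z. \<sigma> z *\<^sub>R gradient_vec (sep_sum uu) z) y = 0)))"
proof -
  interpret separable_gradient_flow uu du ddu T X
    by unfold_locales (fact d1 d2 c2 Tpos per iso flow0 flow)+
  show ?thesis
    using periodic_invariant_density_exists_iff
    unfolding bounded_trajectories_iff laplacian_integral_bounded_iff
      prod_components_nonzero_iff periodic_invariant_density_def
    by (intro conjI refl) (erule sym)
qed

end
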